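(* Let $\kappa$ be a regular uncountable cardinal, $F$ a free filter on $\omega$, and $\mathbb{P}$ a finite support product of posets such that every finite subproduct is $\kappa$-$F$-Knaster. Then $\mathbb{P}$ is $\kappa$-$F$-Knaster. In particular, when $F$ is an ultrafilter, any finite support product of $\kappa$-$F$-Knaster posets is $\kappa$-$F$-Knaster; likewise any finite support product of $\kappa$-uf-Knaster posets is $\kappa$-uf-Knaster.
   Context: A filter $F$ on $\omega$ is free if it contains all cofinite subsets; $F^+$ is the family of sets meeting every member of $F$. For a poset $\mathbb{P}$ and $\bar p=\langle p_n:n<\omega\rangle$ in $\mathbb{P}$, $\dot W(\bar p)$ names $\{n:p_n\in\dot G\}$. $Q\subseteq\mathbb{P}$ is $F$-linked if for every sequence $\bar p$ in $Q$ some $q\in\mathbb{P}$ forces $\dot W(\bar p)\in F^+$; uf-linked if it is $D$-linked for every non-principal ultrafilter $D$ on $\omega$. $\mathbb{P}$ is $\kappa$-$F$-Knaster (resp. $\kappa$-uf-Knaster) if every subset of size $\kappa$ contains an $F$-linked (resp. uf-linked) subset of size $\kappa$. *)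

theory Defs
  imports Main
begin

unbundle cardinal_syntax

text \<open>A forcing poset: a set P with a partial order le (le p q means p is stronger than q)
  and a maximum element one.\<close>
definition is_poset :: "'p set \<Rightarrow> ('p \<Rightarrow> 'p \<Rightarrow> bool) \<Rightarrow> 'p \<Rightarrow> bool" where
  "is_poset P le one \<longleftrightarrow> one \<in> P
     \<and> (\<forall>p\<in>P. le p p)
     \<and> (\<forall>p\<in>P. \<forall>q\<in>P. le p q \<and> le q p \<longrightarrow> p = q)
     \<and> (\<forall>p\<in>P. \<forall>q\<in>P. \<forall>r\<in>P. le p q \<and> le q r \<longrightarrow> le p r)
     \<and> (\<forall>p\<in>P. le p one)"

definition compatible :: "'p set \<Rightarrow> ('p \<Rightarrow> 'p \<Rightarrow> bool) \<Rightarrow> 'p \<Rightarrow> 'p \<Rightarrow> bool" where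
  "compatible P le p q \<longleftrightarrow> (\<exists>r\<in>P. le r p \<and> le r q)"

definition positive :: "nat filter \<Rightarrow> nat set \<Rightarrow> bool" where
  "positive F W \<longleftrightarrow> (\<forall>A. eventually (\<lambda>n. n \<in> A) F \<longrightarrow> W \<inter> A \<noteq> {})"

text \<open>q forces that W(pbar) = {n. pbar n \<in> G} is F-positive, written out combinatorially:
  for each A in F (a ground-model set), the set of conditions below some pbar n with n in A
  is dense below q.\<close>
definition forces_positive ::
  "'p set \<Rightarrow> ('p \<Rightarrow> 'p \<Rightarrow> bool) \<Rightarrow> nat filter \<Rightarrow> (nat \<Rightarrow> 'p) \<Rightarrow> 'p \<Rightarrow> bool" where
  "forces_positive P le F pbar q \<longleftrightarrow>
     (\<forall>A. eventually (\<lambda>n. n \<in> A) F \<longrightarrow>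
        (\<forall>r\<in>P. le r q \<longrightarrow> (\<exists>n\<in>A. compatible P le r (pbar n))))"

definition F_linked :: "'p set \<Rightarrow> ('p \<Rightarrow> 'p \<Rightarrow> bool) \<Rightarrow> nat filter \<Rightarrow> 'p set \<Rightarrow> bool" where
  "F_linked P le F Q \<longleftrightarrow> Q \<subseteq> P \<and>
     (\<forall>pbar. (\<forall>n. pbar n \<in> Q) \<longrightarrow> (\<exists>q\<in>P. forces_positive P le F pbar q))"

definition nonprincipal_ultrafilter :: "nat filter \<Rightarrow> bool" where
  "nonprincipal_ultrafilter D \<longleftrightarrow> D \<noteq> bot
     \<and> (\<forall>A. eventually (\<lambda>n. n \<in> A) D \<or> eventually (\<lambda>n. n \<notin> A) D)
     \<and> (\<forall>n. \<not> eventually (\<lambda>m. m = n) D)"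

definition uf_linked :: "'p set \<Rightarrow> ('p \<Rightarrow> 'p \<Rightarrow> bool) \<Rightarrow> 'p set \<Rightarrow> bool" where
  "uf_linked P le Q \<longleftrightarrow> (\<forall>D. nonprincipal_ultrafilter D \<longrightarrow> F_linked P le D Q)"

definition F_Knaster :: "'k rel \<Rightarrow> 'p set \<Rightarrow> ('p \<Rightarrow> 'p \<Rightarrow> bool) \<Rightarrow> nat filter \<Rightarrow> bool" where
  "F_Knaster \<kappa> P le F \<longleftrightarrow>
     (\<forall>X. X \<subseteq> P \<and> |X| =o \<kappa> \<longrightarrow> (\<exists>Y. Y \<subseteq> X \<and> |Y| =o \<kappa> \<and> F_linked P le F Y))"

definition uf_Knaster :: "'k rel \<Rightarrow> 'p set \<Rightarrow> ('p \<Rightarrow> 'p \<Rightarrow> bool) \<Rightarrow> bool" where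
  "uf_Knaster \<kappa> P le \<longleftrightarrow>
     (\<forall>X. X \<subseteq> P \<and> |X| =o \<kappa> \<longrightarrow> (\<exists>Y. Y \<subseteq> X \<and> |Y| =o \<kappa> \<and> uf_linked P le Y))"

definition fs_prod :: "'i set \<Rightarrow> ('i \<Rightarrow> 'a set) \<Rightarrow> ('i \<Rightarrow> 'a) \<Rightarrow> ('i \<Rightarrow> 'a) set" where
  "fs_prod J P one = {p. (\<forall>i\<in>J. p i \<in> P i) \<and> (\<forall>i. i \<notin> J \<longrightarrow> p i = one i)
                          \<and> finite {i\<in>J. p i \<noteq> one i}}"

definition prod_le :: "'i set \<Rightarrow> ('i \<Rightarrow> 'a \<Rightarrow> 'a \<Rightarrow> bool) \<Rightarrow> ('i \<Rightarrow> 'a) \<Rightarrow> ('i \<Rightarrow> 'a) \<Rightarrow> bool" where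
  "prod_le J le p q \<longleftrightarrow> (\<forall>i\<in>J. le i (p i) (q i))"

end

theory Submission
  imports Defs "HOL-Library.Disjoint_Sets"
begin

text \<open>
  Given \<kappa> many conditions of the full product, the \<Delta>-system lemma thins them out to \<kappa> many whose
  supports are pairwise disjoint outside a finite root R, and the finite subproduct over R yields
  \<kappa> many of those whose restrictions to R are F-linked. Such a family is F-linked in the whole
  product: if one condition occurs F-positively often in a sequence, it forces W positive itself;
  otherwise every single condition is eventually avoided, so below a condition r only the finitely
  many members whose support outside R meets the support of r have to be discarded, and for the
  others compatibility on R together with disjointness outside R gives compatibility.

  For an ultrafilter, q forcing W positive means that every r below q is compatible with almost all
  terms of the sequence, a property stable under finite intersections; so finite products of
  F-Knaster posets are F-Knaster. Carrying a set of filters along handles all non-principal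
  ultrafilters at once, which gives the uf-Knaster case.
\<close>

lemma Cinfinite_if_natLeq_ordLess:
  assumes "Card_order \<kappa>" and "natLeq <o \<kappa>"
  shows "Cinfinite \<kappa>"
  using assms cinfinite_mono natLeq_Cinfinite ordLess_imp_ordLeq by blast

lemma finite_card_of_ordLess:
  assumes "Cinfinite \<kappa>" and "finite A"
  shows "|A| <o \<kappa>"
  using ordLess_ordLeq_trans[OF finite_iff_ordLess_natLeq[THEN iffD1] natLeq_ordLeq_cinfinite] assms
  by blast

lemma not_subset_if_card_of_ordLess:
  assumes "|X| =o \<kappa>" and "|S| <o \<kappa>"
  shows "\<not> X \<subseteq> S"
proof
  assume "X \<subseteq> S"
  then have "|X| <o \<kappa>"
    using card_of_mono1 assms(2) ordLeq_ordLess_trans by blast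
  then show False
    using assms(1) not_ordLess_ordIso by blast
qed

lemma card_of_ordIso_if_subset_not_ordLess:
  assumes "|X| =o \<kappa>" and "S \<subseteq> X" and "\<not> |S| <o \<kappa>"
  shows "|S| =o \<kappa>"
proof -
  have "|S| \<le>o \<kappa>"
    using ordLeq_ordIso_trans[OF card_of_mono1[OF assms(2)] assms(1)] .
  then show ?thesis
    using assms(3) ordLeq_iff_ordLess_or_ordIso by blast
qed

lemma exists_subset_card_of_ordIso:
  assumes "Card_order \<kappa>" and "\<not> |S| <o \<kappa>"
  shows "\<exists>Y\<subseteq>S. |Y| =o \<kappa>"
proof -
  have "\<kappa> \<le>o |S|"
    using assms(2) not_ordLess_iff_ordLeq[OF card_order_on_well_order_on[OF assms(1)] card_of_Well_order]
    by blast
  then have "|Field \<kappa>| \<le>o |S|"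
    using card_of_Field_ordIso[OF assms(1)] ordIso_ordLeq_trans by blast
  then obtain Y where "Y \<subseteq> S" "|Field \<kappa>| =o |Y|"
    using internalize_card_of_ordLeq2[THEN iffD1] by blast
  then show ?thesis
    using assms(1) card_of_Field_ordIso ordIso_symmetric ordIso_transitive by blast
qed

lemma regularCard_pigeonhole:
  assumes \<kappa>: "Cinfinite \<kappa>" "regularCard \<kappa>" and X: "|X| =o \<kappa>" and small_image: "|f ` X| <o \<kappa>"
  shows "\<exists>v\<in>f ` X. |{x\<in>X. f x = v}| =o \<kappa>"
proof (rule ccontr)
  assume no_large_fibre: "\<not> ?thesis"
  have "|{x\<in>X. f x = v}| <o \<kappa>" if "v \<in> f ` X" for v
    using no_large_fibre that card_of_ordIso_if_subset_not_ordLess[OF X, of "{x\<in>X. f x = v}"]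
    by blast
  then have "|\<Union>v\<in>f ` X. {x\<in>X. f x = v}| <o \<kappa>"
    by (intro card_of_UNION_ordLess_infinite_Field_regularCard[OF \<kappa>(2,1) small_image] ballI)
  moreover have "X \<subseteq> (\<Union>v\<in>f ` X. {x\<in>X. f x = v})"
    by blast
  ultimately show False
    using not_subset_if_card_of_ordLess[OF X] by blast
qed

lemma disjoint_family_on_Union_chain:
  assumes "chain\<^sub>\<subseteq> C" and "\<forall>Y\<in>C. disjoint_family_on A Y"
  shows "disjoint_family_on A (\<Union>C)"
proof -
  have "pairwise (\<lambda>m n. A m \<inter> A n = {}) (\<Union>C)"
    by (rule pairwise_chain_Union[OF _ assms(1)])
      (use assms(2) in \<open>simp add: disjoint_family_on_def pairwise_def\<close>)
  then show ?thesis
    by (simp add: disjoint_family_on_def pairwise_def)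
qed

lemma disjoint_subfamily_if_small_fibres:
  assumes \<kappa>: "Cinfinite \<kappa>" "regularCard \<kappa>" and X: "|X| =o \<kappa>"
    and small_sets: "\<forall>x\<in>X. |A x| <o \<kappa>" and small_fibres: "\<forall>i. |{x\<in>X. i \<in> A x}| <o \<kappa>"
  shows "\<exists>Y\<subseteq>X. |Y| =o \<kappa> \<and> disjoint_family_on A Y"
proof -
  let ?C = "{Y. Y \<subseteq> X \<and> disjoint_family_on A Y}"
  have "\<Union>C \<in> ?C" if "C \<in> chains ?C" for C
  proof -
    have "C \<subseteq> ?C" "chain\<^sub>\<subseteq> C"
      using that unfolding chains_def by auto
    then show ?thesis
      using disjoint_family_on_Union_chain[of C A] by blast
  qed
  then obtain M where M: "M \<in> ?C" and maximal: "\<forall>Z\<in>?C. M \<subseteq> Z \<longrightarrow> Z = M"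
    using Zorn_Lemma[of ?C] by blast
  have "\<not> |M| <o \<kappa>"
  proof
    assume small_M: "|M| <o \<kappa>"
    let ?B = "\<Union>i\<in>(\<Union>x\<in>M. A x). {x\<in>X. i \<in> A x}"
    have "|\<Union>x\<in>M. A x| <o \<kappa>"
      by (rule card_of_UNION_ordLess_infinite_Field_regularCard[OF \<kappa>(2,1) small_M])
        (use small_sets M in blast)
    then have "|?B| <o \<kappa>"
      by (rule card_of_UNION_ordLess_infinite_Field_regularCard[OF \<kappa>(2,1)])
        (use small_fibres in blast)
    then have "|M \<union> ?B| <o \<kappa>"
      using card_of_Un_ordLess_infinite_Field[OF _ _ small_M] \<kappa>(1) by (simp add: cinfinite_def)
    then have "\<not> X \<subseteq> M \<union> ?B"
      by (rule not_subset_if_card_of_ordLess[OF X])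
    then obtain x where x: "x \<in> X" "x \<notin> M" "x \<notin> ?B"
      by (meson subsetI UnCI)
    then have "A x \<inter> (\<Union>m\<in>M. A m) = {}"
      by blast
    then have "insert x M \<in> ?C"
      using M x(1) disjoint_family_on_insert[OF x(2)] by blast
    then show False
      using maximal x(2) by blast
  qed
  then obtain Y where "Y \<subseteq> M" "|Y| =o \<kappa>"
    using exists_subset_card_of_ordIso[OF conjunct2[OF \<kappa>(1)]] by blast
  then show ?thesis
    using M disjoint_family_on_mono by blast
qed

lemma delta_system_bounded:
  assumes \<kappa>: "Cinfinite \<kappa>" "regularCard \<kappa>"
  shows "|X| =o \<kappa> \<Longrightarrow> \<forall>x\<in>X. finite (A x) \<and> card (A x) \<le> n \<Longrightarrow>
    \<exists>Y\<subseteq>X. |Y| =o \<kappa> \<and> (\<exists>R. finite R \<and> disjoint_family_on (\<lambda>x. A x - R) Y)"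
proof (induction n arbitrary: X A)
  case 0
  then have "disjoint_family_on (\<lambda>x. A x - {}) X"
    by (auto simp: disjoint_family_on_def)
  then show ?case
    using "0.prems"(1) by (intro exI[of _ X] conjI exI[of _ "{}"]) auto
next
  case (Suc n)
  show ?case
  proof (cases "\<exists>i. \<not> |{x\<in>X. i \<in> A x}| <o \<kappa>")
    case True
    then obtain i where "\<not> |{x\<in>X. i \<in> A x}| <o \<kappa>" ..
    then have "|{x\<in>X. i \<in> A x}| =o \<kappa>"
      by (intro card_of_ordIso_if_subset_not_ordLess[OF Suc.prems(1)]) auto
    moreover have "\<forall>x\<in>{x\<in>X. i \<in> A x}. finite (A x - {i}) \<and> card (A x - {i}) \<le> n"
      using Suc.prems(2) by auto
    ultimately have "\<exists>Y\<subseteq>{x\<in>X. i \<in> A x}. |Y| =o \<kappa> \<and>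
        (\<exists>R. finite R \<and> disjoint_family_on (\<lambda>x. A x - {i} - R) Y)"
      by (rule Suc.IH)
    then obtain Y R where Y: "Y \<subseteq> {x\<in>X. i \<in> A x}" "|Y| =o \<kappa>" "finite R"
      and disjoint: "disjoint_family_on (\<lambda>x. A x - {i} - R) Y"
      by blast
    have "disjoint_family_on (\<lambda>x. A x - insert i R) Y"
      using disjoint by (simp add: Diff_insert2[symmetric])
    then show ?thesis
      using Y by (intro exI[of _ Y] conjI exI[of _ "insert i R"]) auto
  next
    case False
    moreover have "\<forall>x\<in>X. |A x| <o \<kappa>"
      using Suc.prems(2) finite_card_of_ordLess[OF \<kappa>(1)] by blast
    ultimately obtain Y where "Y \<subseteq> X" "|Y| =o \<kappa>" "disjoint_family_on A Y"
      using disjoint_subfamily_if_small_fibres[OF \<kappa> Suc.prems(1)] by blast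
    then have "disjoint_family_on (\<lambda>x. A x - {}) Y"
      by simp
    then show ?thesis
      using \<open>Y \<subseteq> X\<close> \<open>|Y| =o \<kappa>\<close> by (intro exI[of _ Y] conjI exI[of _ "{}"]) auto
  qed
qed

lemma delta_system:
  assumes \<kappa>: "Card_order \<kappa>" "regularCard \<kappa>" "natLeq <o \<kappa>"
    and X: "|X| =o \<kappa>" and finite_sets: "\<forall>x\<in>X. finite (A x)"
  shows "\<exists>Y\<subseteq>X. |Y| =o \<kappa> \<and> (\<exists>R. finite R \<and> disjoint_family_on (\<lambda>x. A x - R) Y)"
proof -
  have Cinf: "Cinfinite \<kappa>"
    using Cinfinite_if_natLeq_ordLess \<kappa>(1,3) .
  have "|(\<lambda>x. card (A x)) ` X| \<le>o |UNIV :: nat set|"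
    by (rule card_of_mono1) simp
  then have "|(\<lambda>x. card (A x)) ` X| <o \<kappa>"
    using ordLeq_ordLess_trans ordIso_ordLess_trans[OF card_of_nat \<kappa>(3)] by blast
  then obtain n where n: "|{x\<in>X. card (A x) = n}| =o \<kappa>"
    using regularCard_pigeonhole[OF Cinf \<kappa>(2) X] by auto
  have bounded: "\<forall>x\<in>{x\<in>X. card (A x) = n}. finite (A x) \<and> card (A x) \<le> n"
    using finite_sets by simp
  obtain Y R where "Y \<subseteq> {x\<in>X. card (A x) = n}" "|Y| =o \<kappa>" "finite R"
    "disjoint_family_on (\<lambda>x. A x - R) Y"
    using delta_system_bounded[OF Cinf \<kappa>(2) n bounded] by blast
  then show ?thesis
    by blast
qed

lemma positive_iff_not_eventually_notin:
  "positive F W \<longleftrightarrow> \<not> eventually (\<lambda>n. n \<notin> W) F"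
proof
  assume "positive F W"
  then have "eventually (\<lambda>n. n \<in> {n. n \<notin> W}) F \<Longrightarrow> W \<inter> {n. n \<notin> W} \<noteq> {}"
    unfolding positive_def by blast
  then show "\<not> eventually (\<lambda>n. n \<notin> W) F"
    by auto
next
  assume not_avoided: "\<not> eventually (\<lambda>n. n \<notin> W) F"
  show "positive F W"
    unfolding positive_def
  proof (intro allI impI notI)
    fix A assume "eventually (\<lambda>n. n \<in> A) F" and "W \<inter> A = {}"
    then have "eventually (\<lambda>n. n \<notin> W) F"
      by (auto elim: eventually_mono)
    then show False
      using not_avoided by contradiction
  qed
qed

lemma positive_nonempty: "positive F W \<Longrightarrow> W \<noteq> {}"
  by (auto simp: positive_iff_not_eventually_notin)

lemma positive_mono: "positive F W \<Longrightarrow> W \<subseteq> V \<Longrightarrow> positive F V"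
  unfolding positive_def by blast

lemma positive_Int_eventually:
  assumes "positive F W" and "eventually P F"
  shows "positive F (W \<inter> {n. P n})"
proof -
  have "eventually (\<lambda>n. n \<notin> W) F" if "eventually (\<lambda>n. n \<notin> W \<inter> {n. P n}) F"
    using eventually_conj[OF that assms(2)] by (rule eventually_mono) blast
  then show ?thesis
    using assms(1) by (auto simp: positive_iff_not_eventually_notin)
qed

definition is_ultrafilter :: "nat filter \<Rightarrow> bool" where
  "is_ultrafilter D \<longleftrightarrow> D \<noteq> bot \<and> (\<forall>A. eventually (\<lambda>n. n \<in> A) D \<or> eventually (\<lambda>n. n \<notin> A) D)"

lemma is_ultrafilter_if_nonprincipal: "nonprincipal_ultrafilter D \<Longrightarrow> is_ultrafilter D"
  unfolding nonprincipal_ultrafilter_def is_ultrafilter_def by blast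

lemma ultrafilter_positive_iff_eventually:
  assumes "is_ultrafilter D"
  shows "positive D W \<longleftrightarrow> eventually (\<lambda>n. n \<in> W) D"
proof
  assume "positive D W"
  then show "eventually (\<lambda>n. n \<in> W) D"
    using assms unfolding is_ultrafilter_def positive_iff_not_eventually_notin by metis
next
  assume in_W: "eventually (\<lambda>n. n \<in> W) D"
  have "\<not> eventually (\<lambda>n. n \<notin> W) D"
  proof
    assume "eventually (\<lambda>n. n \<notin> W) D"
    from eventually_conj[OF in_W this] have "eventually (\<lambda>n. False) D"
      by (rule eventually_mono) blast
    then show False
      using assms by (simp add: is_ultrafilter_def)
  qed
  then show "positive D W"
    by (simp add: positive_iff_not_eventually_notin)
qed

lemma forces_positive_iff:
  "forces_positive P le F pbar q \<longleftrightarrow>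
     (\<forall>r\<in>P. le r q \<longrightarrow> positive F {n. compatible P le r (pbar n)})"
  unfolding forces_positive_def positive_def by fast

lemma forces_positive_if_positive_repetition:
  assumes "positive F {n. pbar n = v}" and refl: "\<forall>r\<in>P. le r r"
  shows "forces_positive P le F pbar v"
  unfolding forces_positive_iff
proof (intro ballI impI)
  fix r assume "r \<in> P" and "le r v"
  then have "{n. pbar n = v} \<subseteq> {n. compatible P le r (pbar n)}"
    using refl unfolding compatible_def by blast
  then show "positive F {n. compatible P le r (pbar n)}"
    by (rule positive_mono[OF assms(1)])
qed

lemma F_linked_singleton:
  assumes "F \<noteq> bot" and "v \<in> P" and "\<forall>r\<in>P. le r r"
  shows "F_linked P le F {v}"
  unfolding F_linked_def
proof (intro conjI allI impI)
  fix pbar :: "nat \<Rightarrow> _" assume "\<forall>n. pbar n \<in> {v}"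
  then have "{n. pbar n = v} = UNIV"
    by blast
  then have "positive F {n. pbar n = v}"
    using assms(1) by (simp add: positive_iff_not_eventually_notin)
  from forces_positive_if_positive_repetition[where P = P and le = le, OF this assms(3)]
  show "\<exists>q\<in>P. forces_positive P le F pbar q"
    using assms(2) by blast
qed (use assms(2) in blast)

lemma F_linkedD:
  "F_linked P le F Q \<Longrightarrow> \<forall>n. pbar n \<in> Q \<Longrightarrow> \<exists>q\<in>P. forces_positive P le F pbar q"
  unfolding F_linked_def by blast

lemma F_linked_subset: "F_linked P le F Q \<Longrightarrow> Q' \<subseteq> Q \<Longrightarrow> F_linked P le F Q'"
  unfolding F_linked_def by blast

lemma finite_meeting_if_disjoint_family_on:
  assumes disjoint: "disjoint_family_on B Y" and "finite S"
  shows "finite {y\<in>Y. B y \<inter> S \<noteq> {}}"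
proof -
  have "finite {y\<in>Y. i \<in> B y}" for i
  proof (cases "\<exists>y\<in>Y. i \<in> B y")
    case True
    then obtain y0 where "y0 \<in> Y" "i \<in> B y0" ..
    have "{y\<in>Y. i \<in> B y} \<subseteq> {y0}"
    proof
      fix y assume "y \<in> {y\<in>Y. i \<in> B y}"
      then show "y \<in> {y0}"
        using disjoint_family_onD[OF disjoint _ \<open>y0 \<in> Y\<close>] \<open>i \<in> B y0\<close> by blast
    qed
    then show ?thesis
      by (rule finite_subset) simp
  next
    case False
    then have "{y\<in>Y. i \<in> B y} = {}"
      by blast
    then show ?thesis
      by (metis finite.emptyI)
  qed
  moreover have "{y\<in>Y. B y \<inter> S \<noteq> {}} = (\<Union>i\<in>S. {y\<in>Y. i \<in> B y})"
    by blast
  ultimately show ?thesis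
    using \<open>finite S\<close> by simp
qed

lemma is_poset_refl: "is_poset P le one \<Longrightarrow> p \<in> P \<Longrightarrow> le p p"
  unfolding is_poset_def by blast

lemma is_poset_top: "is_poset P le one \<Longrightarrow> p \<in> P \<Longrightarrow> le p one"
  unfolding is_poset_def by blast

lemma is_poset_one: "is_poset P le one \<Longrightarrow> one \<in> P"
  unfolding is_poset_def by blast

definition supp :: "('i \<Rightarrow> 'a) \<Rightarrow> ('i \<Rightarrow> 'a) \<Rightarrow> 'i set" where
  "supp one p = {i. p i \<noteq> one i}"

definition fs_restrict :: "'i set \<Rightarrow> ('i \<Rightarrow> 'a) \<Rightarrow> ('i \<Rightarrow> 'a) \<Rightarrow> 'i \<Rightarrow> 'a" where
  "fs_restrict R one p = (\<lambda>i. if i \<in> R then p i else one i)"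

lemma mem_fs_prod_iff:
  "p \<in> fs_prod J P one \<longleftrightarrow> (\<forall>i\<in>J. p i \<in> P i) \<and> supp one p \<subseteq> J \<and> finite (supp one p)"
proof -
  have "supp one p \<subseteq> J \<longleftrightarrow> (\<forall>i. i \<notin> J \<longrightarrow> p i = one i)"
    unfolding supp_def by blast
  moreover have "supp one p \<subseteq> J \<Longrightarrow> {i\<in>J. p i \<noteq> one i} = supp one p"
    unfolding supp_def by blast
  ultimately show ?thesis
    unfolding fs_prod_def by auto
qed

lemma fs_restrict_in_fs_prod:
  assumes "p \<in> fs_prod I P one" and "R \<subseteq> I"
  shows "fs_restrict R one p \<in> fs_prod R P one"
proof -
  have supp: "supp one (fs_restrict R one p) \<subseteq> R \<inter> supp one p"
    by (auto simp: supp_def fs_restrict_def)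
  moreover have "finite (supp one (fs_restrict R one p))"
    using finite_subset[OF supp] assms(1) by (simp add: mem_fs_prod_iff)
  ultimately show ?thesis
    using assms by (auto simp: mem_fs_prod_iff fs_restrict_def)
qed

lemma fs_restrict_in_fs_prod_finite:
  assumes "finite J" and "\<forall>j\<in>J. s j \<in> P j"
  shows "fs_restrict J one s \<in> fs_prod J P one"
proof -
  have supp: "supp one (fs_restrict J one s) \<subseteq> J"
    by (auto simp: supp_def fs_restrict_def)
  moreover have "finite (supp one (fs_restrict J one s))"
    using finite_subset[OF supp assms(1)] .
  ultimately show ?thesis
    using assms(2) by (auto simp: mem_fs_prod_iff fs_restrict_def)
qed

lemma fs_prod_mono:
  assumes "R \<subseteq> I" and "\<forall>i\<in>I. one i \<in> P i"
  shows "fs_prod R P one \<subseteq> fs_prod I P one"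
proof
  fix p assume "p \<in> fs_prod R P one"
  moreover have "p i \<in> P i" if "i \<in> I" "p \<in> fs_prod R P one" for i
  proof (cases "i \<in> R")
    case False
    then have "p i = one i"
      using that(2) unfolding mem_fs_prod_iff supp_def by blast
    then show ?thesis
      using that(1) assms(2) by simp
  qed (use that in \<open>simp add: mem_fs_prod_iff\<close>)
  ultimately show "p \<in> fs_prod I P one"
    using assms(1) by (auto simp: mem_fs_prod_iff)
qed

lemma prod_le_refl:
  assumes "\<forall>i\<in>I. is_poset (P i) (le i) (one i)" and "p \<in> fs_prod I P one"
  shows "prod_le I le p p"
  unfolding prod_le_def
proof
  fix i assume "i \<in> I"
  then show "le i (p i) (p i)"
    using is_poset_refl[of "P i" "le i" "one i" "p i"] assms by (simp add: mem_fs_prod_iff)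
qed

lemma compatible_fs_prod_finite:
  assumes "finite J" and "\<forall>j\<in>J. compatible (P j) (le j) (r j) (p j)"
  shows "compatible (fs_prod J P one) (prod_le J le) r p"
proof -
  obtain s where s: "\<forall>j\<in>J. s j \<in> P j \<and> le j (s j) (r j) \<and> le j (s j) (p j)"
  proof -
    have "\<forall>j\<in>J. \<exists>x. x \<in> P j \<and> le j x (r j) \<and> le j x (p j)"
      using assms(2) unfolding compatible_def by blast
    from bchoice[OF this] show ?thesis
      using that by blast
  qed
  have "fs_restrict J one s \<in> fs_prod J P one"
    using fs_restrict_in_fs_prod_finite[OF assms(1)] s by blast
  moreover have "prod_le J le (fs_restrict J one s) r" "prod_le J le (fs_restrict J one s) p"
    using s by (auto simp: prod_le_def fs_restrict_def)
  ultimately show ?thesis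
    unfolding compatible_def by blast
qed

lemma compatible_fs_prod_if_compatible_on_root:
  assumes posets: "\<forall>i\<in>I. is_poset (P i) (le i) (one i)" and R: "R \<subseteq> I"
    and r: "r \<in> fs_prod I P one" and p: "p \<in> fs_prod I P one"
    and disjoint: "supp one r \<inter> supp one p \<subseteq> R"
    and compatible_on_root:
      "compatible (fs_prod R P one) (prod_le R le) (fs_restrict R one r) (fs_restrict R one p)"
  shows "compatible (fs_prod I P one) (prod_le I le) r p"
proof -
  obtain s where s: "s \<in> fs_prod R P one"
    and s_below: "prod_le R le s (fs_restrict R one r)" "prod_le R le s (fs_restrict R one p)"
    using compatible_on_root unfolding compatible_def by blast
  define t where "t i = (if i \<in> R then s i else if r i \<noteq> one i then r i else p i)" for i
  have supp: "supp one t \<subseteq> supp one s \<union> supp one r \<union> supp one p"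
    by (auto simp: supp_def t_def)
  moreover have "finite (supp one t)"
    using finite_subset[OF supp] s r p by (simp add: mem_fs_prod_iff)
  moreover have "supp one t \<subseteq> I"
    using supp s r p R unfolding mem_fs_prod_iff by blast
  moreover have "t i \<in> P i" if "i \<in> I" for i
    using s r p R that by (auto simp: mem_fs_prod_iff t_def)
  ultimately have t: "t \<in> fs_prod I P one"
    by (simp add: mem_fs_prod_iff)
  have "le i (t i) (r i) \<and> le i (t i) (p i)" if "i \<in> I" for i
  proof (cases "i \<in> R")
    case True
    then show ?thesis
      using s_below by (simp add: prod_le_def fs_restrict_def t_def)
  next
    case False
    have poset: "is_poset (P i) (le i) (one i)"
      using posets \<open>i \<in> I\<close> by blast
    have "r i \<in> P i" "p i \<in> P i"
      using r p \<open>i \<in> I\<close> by (simp_all add: mem_fs_prod_iff)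
    moreover have "r i = one i \<or> p i = one i"
      using disjoint False by (auto simp: supp_def)
    ultimately show ?thesis
      using False is_poset_refl[OF poset] is_poset_top[OF poset] by (auto simp: t_def)
  qed
  then show ?thesis
    unfolding compatible_def prod_le_def using t by blast
qed

lemma forces_positive_fs_prod_if_on_root:
  assumes posets: "\<forall>i\<in>I. is_poset (P i) (le i) (one i)" and R: "R \<subseteq> I"
    and Y: "Y \<subseteq> fs_prod I P one" and disjoint: "disjoint_family_on (\<lambda>p. supp one p - R) Y"
    and pbar: "\<forall>n. pbar n \<in> Y" and avoids: "\<forall>v. eventually (\<lambda>n. pbar n \<noteq> v) F"
    and forces: "forces_positive (fs_prod R P one) (prod_le R le) F (\<lambda>n. fs_restrict R one (pbar n)) q"
  shows "forces_positive (fs_prod I P one) (prod_le I le) F pbar q"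
  unfolding forces_positive_iff
proof (intro ballI impI)
  fix r assume r: "r \<in> fs_prod I P one" and "prod_le I le r q"
  let ?bad = "{p\<in>Y. (supp one p - R) \<inter> supp one r \<noteq> {}}"
  have "finite ?bad"
    using finite_meeting_if_disjoint_family_on[OF disjoint] r by (simp add: mem_fs_prod_iff)
  then have "eventually (\<lambda>n. \<forall>v\<in>?bad. pbar n \<noteq> v) F"
    by (rule eventually_ball_finite) (use avoids in blast)
  then have avoids_bad: "eventually (\<lambda>n. pbar n \<notin> ?bad) F"
    by (rule eventually_mono) blast
  have "fs_restrict R one r \<in> fs_prod R P one"
    by (rule fs_restrict_in_fs_prod[OF r R])
  moreover have "prod_le R le (fs_restrict R one r) q"
    using \<open>prod_le I le r q\<close> R by (auto simp: prod_le_def fs_restrict_def)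
  ultimately have "positive F {n. compatible (fs_prod R P one) (prod_le R le)
      (fs_restrict R one r) (fs_restrict R one (pbar n))}"
    using forces unfolding forces_positive_iff by blast
  from positive_Int_eventually[OF this avoids_bad]
  show "positive F {n. compatible (fs_prod I P one) (prod_le I le) r (pbar n)}"
  proof (rule positive_mono, intro subsetI)
    fix n
    assume "n \<in> {n. compatible (fs_prod R P one) (prod_le R le)
      (fs_restrict R one r) (fs_restrict R one (pbar n))} \<inter> {n. pbar n \<notin> ?bad}"
    then have compatible_on_root: "compatible (fs_prod R P one) (prod_le R le)
        (fs_restrict R one r) (fs_restrict R one (pbar n))"
      and "pbar n \<notin> ?bad"
      by simp_all
    then have "supp one r \<inter> supp one (pbar n) \<subseteq> R"
      using pbar by blast
    moreover have "pbar n \<in> fs_prod I P one"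
      using pbar Y by blast
    ultimately show "n \<in> {n. compatible (fs_prod I P one) (prod_le I le) r (pbar n)}"
      using compatible_fs_prod_if_compatible_on_root[OF posets R r _ _ compatible_on_root] by simp
  qed
qed

lemma F_linked_fs_prod_if_linked_on_root:
  assumes posets: "\<forall>i\<in>I. is_poset (P i) (le i) (one i)" and R: "R \<subseteq> I"
    and Y: "Y \<subseteq> fs_prod I P one" and disjoint: "disjoint_family_on (\<lambda>p. supp one p - R) Y"
    and linked: "F_linked (fs_prod R P one) (prod_le R le) F (fs_restrict R one ` Y)"
  shows "F_linked (fs_prod I P one) (prod_le I le) F Y"
  unfolding F_linked_def
proof (intro conjI allI impI)
  fix pbar :: "nat \<Rightarrow> _" assume pbar: "\<forall>n. pbar n \<in> Y"
  show "\<exists>q\<in>fs_prod I P one. forces_positive (fs_prod I P one) (prod_le I le) F pbar q"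
  proof (cases "\<exists>v. positive F {n. pbar n = v}")
    case True
    then obtain v where v: "positive F {n. pbar n = v}" ..
    then obtain m where "pbar m = v"
      using positive_nonempty by blast
    then have "v \<in> fs_prod I P one"
      using pbar Y by blast
    moreover have "\<forall>r\<in>fs_prod I P one. prod_le I le r r"
      using prod_le_refl[OF posets] by blast
    ultimately show ?thesis
      using forces_positive_if_positive_repetition[where P = "fs_prod I P one" and le = "prod_le I le", OF v]
      by blast
  next
    case False
    then have avoids: "\<forall>v. eventually (\<lambda>n. pbar n \<noteq> v) F"
      by (simp add: positive_iff_not_eventually_notin)
    have "\<forall>n. fs_restrict R one (pbar n) \<in> fs_restrict R one ` Y"
      using pbar by blast
    from F_linkedD[OF linked this] obtain q where q: "q \<in> fs_prod R P one"
      and forces: "forces_positive (fs_prod R P one) (prod_le R le) F (\<lambda>n. fs_restrict R one (pbar n)) q"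
      by blast
    have "one i \<in> P i" if "i \<in> I" for i
      using is_poset_one[of "P i" "le i" "one i"] posets that by blast
    then have "q \<in> fs_prod I P one"
      using fs_prod_mono[OF R] q by blast
    then show ?thesis
      using forces_positive_fs_prod_if_on_root[OF posets R Y disjoint pbar avoids forces] by blast
  qed
qed (use Y in blast)

lemma ultrafilter_forces_positive_eventually:
  assumes "is_ultrafilter D" and "forces_positive P le D pbar q" and "r \<in> P" and "le r q"
  shows "eventually (\<lambda>n. compatible P le r (pbar n)) D"
proof -
  have "positive D {n. compatible P le r (pbar n)}"
    using assms(2-4) unfolding forces_positive_iff by blast
  then show ?thesis
    using ultrafilter_positive_iff_eventually[OF assms(1)] by simp
qed

lemma forces_positive_fs_prod_finite:
  assumes J: "finite J" and D: "is_ultrafilter D"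
    and a: "\<forall>j\<in>J. a j \<in> P j \<and> forces_positive (P j) (le j) D (\<lambda>n. pbar n j) (a j)"
  shows "forces_positive (fs_prod J P one) (prod_le J le) D pbar (fs_restrict J one a)"
  unfolding forces_positive_iff
proof (intro ballI impI)
  fix r assume r: "r \<in> fs_prod J P one" and below: "prod_le J le r (fs_restrict J one a)"
  have "eventually (\<lambda>n. compatible (P j) (le j) (r j) (pbar n j)) D" if "j \<in> J" for j
  proof (rule ultrafilter_forces_positive_eventually[OF D])
    show "forces_positive (P j) (le j) D (\<lambda>n. pbar n j) (a j)"
      using a that by blast
    show "r j \<in> P j" "le j (r j) (a j)"
      using r below that by (simp_all add: mem_fs_prod_iff prod_le_def fs_restrict_def)
  qed
  then have "eventually (\<lambda>n. \<forall>j\<in>J. compatible (P j) (le j) (r j) (pbar n j)) D"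
    by (intro eventually_ball_finite[OF J] ballI)
  then have "eventually (\<lambda>n. compatible (fs_prod J P one) (prod_le J le) r (pbar n)) D"
    by (rule eventually_mono) (rule compatible_fs_prod_finite[OF J])
  then show "positive D {n. compatible (fs_prod J P one) (prod_le J le) r (pbar n)}"
    using ultrafilter_positive_iff_eventually[OF D] by simp
qed

lemma F_linked_fs_prod_finite:
  assumes J: "finite J" and D: "is_ultrafilter D" and Y: "Y \<subseteq> fs_prod J P one"
    and linked: "\<forall>j\<in>J. F_linked (P j) (le j) D ((\<lambda>p. p j) ` Y)"
  shows "F_linked (fs_prod J P one) (prod_le J le) D Y"
  unfolding F_linked_def
proof (intro conjI allI impI)
  fix pbar :: "nat \<Rightarrow> _" assume pbar: "\<forall>n. pbar n \<in> Y"
  have "\<forall>j\<in>J. \<exists>a. a \<in> P j \<and> forces_positive (P j) (le j) D (\<lambda>n. pbar n j) a"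
  proof
    fix j assume "j \<in> J"
    have "\<forall>n. pbar n j \<in> (\<lambda>p. p j) ` Y"
      using pbar by blast
    from F_linkedD[OF linked[rule_format, OF \<open>j \<in> J\<close>] this]
    show "\<exists>a. a \<in> P j \<and> forces_positive (P j) (le j) D (\<lambda>n. pbar n j) a"
      by blast
  qed
  from bchoice[OF this] obtain a
    where a: "\<forall>j\<in>J. a j \<in> P j \<and> forces_positive (P j) (le j) D (\<lambda>n. pbar n j) (a j)"
    by blast
  then have "fs_restrict J one a \<in> fs_prod J P one"
    using fs_restrict_in_fs_prod_finite[OF J] by blast
  then show "\<exists>q\<in>fs_prod J P one. forces_positive (fs_prod J P one) (prod_le J le) D pbar q"
    using forces_positive_fs_prod_finite[OF J D a] by blast
qed (use Y in blast)

definition Knaster_wrt :: "'k rel \<Rightarrow> 'p set \<Rightarrow> ('p \<Rightarrow> 'p \<Rightarrow> bool) \<Rightarrow> nat filter set \<Rightarrow> bool" where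
  "Knaster_wrt \<kappa> P le FF \<longleftrightarrow>
     (\<forall>X. X \<subseteq> P \<and> |X| =o \<kappa> \<longrightarrow> (\<exists>Y\<subseteq>X. |Y| =o \<kappa> \<and> (\<forall>D\<in>FF. F_linked P le D Y)))"

lemma F_Knaster_iff_Knaster_wrt: "F_Knaster \<kappa> P le F \<longleftrightarrow> Knaster_wrt \<kappa> P le {F}"
  unfolding F_Knaster_def Knaster_wrt_def by simp

lemma uf_Knaster_iff_Knaster_wrt:
  "uf_Knaster \<kappa> P le \<longleftrightarrow> Knaster_wrt \<kappa> P le {D. nonprincipal_ultrafilter D}"
  unfolding uf_Knaster_def uf_linked_def Knaster_wrt_def by (simp add: Ball_def)

lemma Knaster_wrt_image:
  assumes \<kappa>: "Cinfinite \<kappa>" "regularCard \<kappa>" and Knaster: "Knaster_wrt \<kappa> P le FF"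
    and proper: "\<forall>D\<in>FF. D \<noteq> bot" and refl: "\<forall>r\<in>P. le r r"
    and X: "|X| =o \<kappa>" and f: "f ` X \<subseteq> P"
  shows "\<exists>Y\<subseteq>X. |Y| =o \<kappa> \<and> (\<forall>D\<in>FF. F_linked P le D (f ` Y))"
proof (cases "|f ` X| <o \<kappa>")
  case True
  from regularCard_pigeonhole[OF \<kappa> X True]
  obtain v where v: "v \<in> f ` X" and large: "|{x\<in>X. f x = v}| =o \<kappa>"
    by blast
  have "v \<in> P"
    using v f by blast
  then have "\<forall>D\<in>FF. F_linked P le D {v}"
    using F_linked_singleton[where le = le, OF _ _ refl] proper by blast
  moreover have "f ` {x\<in>X. f x = v} = {v}"
    using v by auto
  ultimately show ?thesis
    using large by (intro exI[of _ "{x\<in>X. f x = v}"]) auto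
next
  case False
  have "|f ` X| \<le>o \<kappa>"
    using ordLeq_ordIso_trans[OF card_of_image X] .
  then have "|f ` X| =o \<kappa>"
    using ordLeq_iff_ordLess_or_ordIso False by blast
  from Knaster[unfolded Knaster_wrt_def, rule_format, OF conjI[OF f this]]
  obtain Z where Z: "Z \<subseteq> f ` X" "|Z| =o \<kappa>" and linked: "\<forall>D\<in>FF. F_linked P le D Z"
    by blast
  from Z(1) obtain Y where Y: "Y \<subseteq> X" "inj_on f Y" "Z = f ` Y"
    unfolding subset_image_inj by blast
  then have "|Y| =o |Z|"
    using card_of_ordIsoI[of f Y Z] bij_betw_imageI by blast
  then have "|Y| =o \<kappa>"
    using ordIso_transitive[OF _ Z(2)] by blast
  then show ?thesis
    using Y(1,3) linked by (intro exI[of _ Y]) auto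
qed

lemma Knaster_wrt_images_finite:
  assumes \<kappa>: "Cinfinite \<kappa>" "regularCard \<kappa>" and K: "finite K"
    and Knaster: "\<forall>j\<in>K. Knaster_wrt \<kappa> (P j) (le j) FF"
    and proper: "\<forall>D\<in>FF. D \<noteq> bot" and refl: "\<forall>j\<in>K. \<forall>r\<in>P j. le j r r"
    and X: "|X| =o \<kappa>" and f: "\<forall>j\<in>K. f j ` X \<subseteq> P j"
  shows "\<exists>Y\<subseteq>X. |Y| =o \<kappa> \<and> (\<forall>j\<in>K. \<forall>D\<in>FF. F_linked (P j) (le j) D (f j ` Y))"
  using K Knaster refl f
proof (induction K rule: finite_induct)
  case empty
  then show ?case
    using X by blast
next
  case (insert k K)
  have "\<exists>Y\<subseteq>X. |Y| =o \<kappa> \<and> (\<forall>j\<in>K. \<forall>D\<in>FF. F_linked (P j) (le j) D (f j ` Y))"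
    by (rule insert.IH) (use insert.prems in blast)+
  then obtain Y where Y: "Y \<subseteq> X" "|Y| =o \<kappa>"
    and linked: "\<forall>j\<in>K. \<forall>D\<in>FF. F_linked (P j) (le j) D (f j ` Y)"
    by blast
  have Knaster_k: "Knaster_wrt \<kappa> (P k) (le k) FF" and refl_k: "\<forall>r\<in>P k. le k r r"
    and f_k: "f k ` Y \<subseteq> P k"
    using insert.prems Y(1) by blast+
  from Knaster_wrt_image[OF \<kappa> Knaster_k proper refl_k Y(2) f_k]
  obtain Y' where Y': "Y' \<subseteq> Y" "|Y'| =o \<kappa>" and linked_k: "\<forall>D\<in>FF. F_linked (P k) (le k) D (f k ` Y')"
    by blast
  have "F_linked (P j) (le j) D (f j ` Y')" if "j \<in> K" "D \<in> FF" for j D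
    using F_linked_subset[OF _ image_mono[OF Y'(1)]] linked that by blast
  moreover have "Y' \<subseteq> X"
    using Y(1) Y'(1) by blast
  ultimately show ?case
    using Y'(2) linked_k by (intro exI[of _ Y']) auto
qed

lemma Knaster_wrt_fs_prod_finite:
  assumes \<kappa>: "Cinfinite \<kappa>" "regularCard \<kappa>" and J: "finite J"
    and posets: "\<forall>j\<in>J. is_poset (P j) (le j) (one j)"
    and ultra: "\<forall>D\<in>FF. is_ultrafilter D" and Knaster: "\<forall>j\<in>J. Knaster_wrt \<kappa> (P j) (le j) FF"
  shows "Knaster_wrt \<kappa> (fs_prod J P one) (prod_le J le) FF"
  unfolding Knaster_wrt_def
proof (intro allI impI)
  fix X assume X: "X \<subseteq> fs_prod J P one \<and> |X| =o \<kappa>"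
  have proper: "\<forall>D\<in>FF. D \<noteq> bot"
    using ultra by (simp add: is_ultrafilter_def)
  have refl: "\<forall>j\<in>J. \<forall>r\<in>P j. le j r r"
    using posets unfolding is_poset_def by blast
  have "\<forall>j\<in>J. (\<lambda>p. p j) ` X \<subseteq> P j"
    using X by (auto simp: mem_fs_prod_iff)
  from Knaster_wrt_images_finite[OF \<kappa> J Knaster proper refl _ this] X
  obtain Y where Y: "Y \<subseteq> X" "|Y| =o \<kappa>"
    and linked: "\<forall>j\<in>J. \<forall>D\<in>FF. F_linked (P j) (le j) D ((\<lambda>p. p j) ` Y)"
    by blast
  have "F_linked (fs_prod J P one) (prod_le J le) D Y" if "D \<in> FF" for D
  proof (rule F_linked_fs_prod_finite[OF J])
    show "is_ultrafilter D"
      using ultra that by blast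
    show "Y \<subseteq> fs_prod J P one"
      using Y(1) X by blast
    show "\<forall>j\<in>J. F_linked (P j) (le j) D ((\<lambda>p. p j) ` Y)"
      using linked that by blast
  qed
  then show "\<exists>Y\<subseteq>X. |Y| =o \<kappa> \<and> (\<forall>D\<in>FF. F_linked (fs_prod J P one) (prod_le J le) D Y)"
    using Y by blast
qed

lemma delta_system_fs_prod:
  assumes \<kappa>: "Card_order \<kappa>" "regularCard \<kappa>" "natLeq <o \<kappa>"
    and X: "X \<subseteq> fs_prod I P one" "|X| =o \<kappa>"
  shows "\<exists>Y\<subseteq>X. |Y| =o \<kappa> \<and> (\<exists>R\<subseteq>I. finite R \<and> disjoint_family_on (\<lambda>p. supp one p - R) Y)"
proof -
  have "\<forall>p\<in>X. finite (supp one p)"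
    using X(1) by (auto simp: mem_fs_prod_iff)
  from delta_system[OF \<kappa> X(2) this]
  obtain Y R0 where Y: "Y \<subseteq> X" "|Y| =o \<kappa>" "finite R0"
    and disjoint0: "disjoint_family_on (\<lambda>p. supp one p - R0) Y"
    by blast
  have supp_eq: "supp one p - (R0 \<inter> I) = supp one p - R0" if "p \<in> Y" for p
  proof -
    have "p \<in> fs_prod I P one"
      using that Y(1) X(1) by blast
    then have "supp one p \<subseteq> I"
      by (simp add: mem_fs_prod_iff)
    then show ?thesis
      by auto
  qed
  have "disjoint_family_on (\<lambda>p. supp one p - (R0 \<inter> I)) Y"
    unfolding disjoint_family_on_def
  proof (intro ballI impI)
    fix m n assume "m \<in> Y" "n \<in> Y" "m \<noteq> n"
    then show "(supp one m - (R0 \<inter> I)) \<inter> (supp one n - (R0 \<inter> I)) = {}"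
      using disjoint_family_onD[OF disjoint0] supp_eq by simp
  qed
  then show ?thesis
    using Y by (intro exI[of _ Y] conjI exI[of _ "R0 \<inter> I"]) auto
qed

lemma Knaster_wrt_fs_prod_if_finite_subproducts:
  assumes \<kappa>: "Card_order \<kappa>" "regularCard \<kappa>" "natLeq <o \<kappa>"
    and posets: "\<forall>i\<in>I. is_poset (P i) (le i) (one i)" and proper: "\<forall>D\<in>FF. D \<noteq> bot"
    and finite_subproducts:
      "\<forall>J. J \<subseteq> I \<and> finite J \<longrightarrow> Knaster_wrt \<kappa> (fs_prod J P one) (prod_le J le) FF"
  shows "Knaster_wrt \<kappa> (fs_prod I P one) (prod_le I le) FF"
  unfolding Knaster_wrt_def
proof (intro allI impI)
  fix X assume X: "X \<subseteq> fs_prod I P one \<and> |X| =o \<kappa>"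
  from delta_system_fs_prod[OF \<kappa> conjunct1[OF X] conjunct2[OF X]]
  obtain Y0 R where Y0: "Y0 \<subseteq> X" "|Y0| =o \<kappa>" and R: "R \<subseteq> I" "finite R"
    and disjoint: "disjoint_family_on (\<lambda>p. supp one p - R) Y0"
    by blast
  have Knaster_R: "Knaster_wrt \<kappa> (fs_prod R P one) (prod_le R le) FF"
    using finite_subproducts R by blast
  have refl_R: "\<forall>r\<in>fs_prod R P one. prod_le R le r r"
    using prod_le_refl[of R P le one] posets R(1) by blast
  have "fs_restrict R one ` Y0 \<subseteq> fs_prod R P one"
    using fs_restrict_in_fs_prod[OF _ R(1)] Y0(1) X by blast
  from Knaster_wrt_image[OF Cinfinite_if_natLeq_ordLess[OF \<kappa>(1,3)] \<kappa>(2) Knaster_R proper refl_R Y0(2) this]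
  obtain Y where Y: "Y \<subseteq> Y0" "|Y| =o \<kappa>"
    and linked: "\<forall>D\<in>FF. F_linked (fs_prod R P one) (prod_le R le) D (fs_restrict R one ` Y)"
    by blast
  have "Y \<subseteq> fs_prod I P one"
    using Y(1) Y0(1) X by blast
  then have "\<forall>D\<in>FF. F_linked (fs_prod I P one) (prod_le I le) D Y"
    using F_linked_fs_prod_if_linked_on_root[OF posets R(1) _ disjoint_family_on_mono[OF Y(1) disjoint]]
      linked by blast
  then show "\<exists>Y\<subseteq>X. |Y| =o \<kappa> \<and> (\<forall>D\<in>FF. F_linked (fs_prod I P one) (prod_le I le) D Y)"
    using Y Y0(1) by blast
qed

lemma Knaster_wrt_fs_prod:
  assumes \<kappa>: "Card_order \<kappa>" "regularCard \<kappa>" "natLeq <o \<kappa>"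
    and posets: "\<forall>i\<in>I. is_poset (P i) (le i) (one i)"
    and ultra: "\<forall>D\<in>FF. is_ultrafilter D" and Knaster: "\<forall>i\<in>I. Knaster_wrt \<kappa> (P i) (le i) FF"
  shows "Knaster_wrt \<kappa> (fs_prod I P one) (prod_le I le) FF"
proof (rule Knaster_wrt_fs_prod_if_finite_subproducts[OF \<kappa> posets])
  show "\<forall>D\<in>FF. D \<noteq> bot"
    using ultra by (simp add: is_ultrafilter_def)
  show "\<forall>J. J \<subseteq> I \<and> finite J \<longrightarrow> Knaster_wrt \<kappa> (fs_prod J P one) (prod_le J le) FF"
  proof (intro allI impI)
    fix J assume J: "J \<subseteq> I \<and> finite J"
    have "\<forall>j\<in>J. is_poset (P j) (le j) (one j)" "\<forall>j\<in>J. Knaster_wrt \<kappa> (P j) (le j) FF"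
      using posets Knaster J by blast+
    then show "Knaster_wrt \<kappa> (fs_prod J P one) (prod_le J le) FF"
      using Knaster_wrt_fs_prod_finite[OF Cinfinite_if_natLeq_ordLess[OF \<kappa>(1,3)] \<kappa>(2) _ _ ultra] J
      by blast
  qed
qed

theorem theorem3p21:
  fixes \<kappa> :: "'k rel" and F :: "nat filter" and I :: "'i set"
    and P :: "'i \<Rightarrow> 'a set" and le :: "'i \<Rightarrow> 'a \<Rightarrow> 'a \<Rightarrow> bool" and one :: "'i \<Rightarrow> 'a"
  assumes card: "Card_order \<kappa>" and regular: "regularCard \<kappa>" and uncountable: "natLeq <o \<kappa>"
    and posets: "\<forall>i\<in>I. is_poset (P i) (le i) (one i)"
  shows
    "(F \<noteq> bot \<and> F \<le> cofinite \<and>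
       (\<forall>J. J \<subseteq> I \<and> finite J \<longrightarrow> F_Knaster \<kappa> (fs_prod J P one) (prod_le J le) F)
       \<longrightarrow> F_Knaster \<kappa> (fs_prod I P one) (prod_le I le) F)
   \<and> (nonprincipal_ultrafilter F \<and> (\<forall>i\<in>I. F_Knaster \<kappa> (P i) (le i) F)
       \<longrightarrow> F_Knaster \<kappa> (fs_prod I P one) (prod_le I le) F)
   \<and> ((\<forall>i\<in>I. uf_Knaster \<kappa> (P i) (le i))
       \<longrightarrow> uf_Knaster \<kappa> (fs_prod I P one) (prod_le I le))"
proof (intro conjI impI)
  assume "F \<noteq> bot \<and> F \<le> cofinite \<and>
    (\<forall>J. J \<subseteq> I \<and> finite J \<longrightarrow> F_Knaster \<kappa> (fs_prod J P one) (prod_le J le) F)"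
  then have "\<forall>D\<in>{F}. D \<noteq> bot"
    and "\<forall>J. J \<subseteq> I \<and> finite J \<longrightarrow> Knaster_wrt \<kappa> (fs_prod J P one) (prod_le J le) {F}"
    by (simp_all add: F_Knaster_iff_Knaster_wrt)
  from Knaster_wrt_fs_prod_if_finite_subproducts[OF card regular uncountable posets this]
  show "F_Knaster \<kappa> (fs_prod I P one) (prod_le I le) F"
    by (simp add: F_Knaster_iff_Knaster_wrt)
next
  assume "nonprincipal_ultrafilter F \<and> (\<forall>i\<in>I. F_Knaster \<kappa> (P i) (le i) F)"
  then have "\<forall>D\<in>{F}. is_ultrafilter D" and "\<forall>i\<in>I. Knaster_wrt \<kappa> (P i) (le i) {F}"
    by (simp_all add: is_ultrafilter_if_nonprincipal F_Knaster_iff_Knaster_wrt)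
  from Knaster_wrt_fs_prod[OF card regular uncountable posets this]
  show "F_Knaster \<kappa> (fs_prod I P one) (prod_le I le) F"
    by (simp add: F_Knaster_iff_Knaster_wrt)
next
  assume "\<forall>i\<in>I. uf_Knaster \<kappa> (P i) (le i)"
  then have "\<forall>D\<in>{D. nonprincipal_ultrafilter D}. is_ultrafilter D"
    and "\<forall>i\<in>I. Knaster_wrt \<kappa> (P i) (le i) {D. nonprincipal_ultrafilter D}"
    by (simp_all add: is_ultrafilter_if_nonprincipal uf_Knaster_iff_Knaster_wrt)
  from Knaster_wrt_fs_prod[OF card regular uncountable posets this]
  show "uf_Knaster \<kappa> (fs_prod I P one) (prod_le I le)"
    by (simp add: uf_Knaster_iff_Knaster_wrt)
qed

end
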